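(* Let $n\ge1$ and let $\alpha_1,\dots,\alpha_n$ be congruences of a group $(G,\cdot,{}^{-1},1)$. Then $[\alpha_1,\dots,\alpha_n]_{(G,\cdot,{}^{-1},1)}=[\alpha_1,\dots,\alpha_n]_{(G,\cdot)}$, i.e. the commutator computed in the group equals the commutator computed in its semigroup reduct.
   Context: For an algebra $\mathbf A$ and congruences $\alpha_1,\dots,\alpha_n$, $M_{\mathbf A}(\alpha_1,\dots,\alpha_n)$ is the subalgebra of $\mathbf A^{\{0,1\}^n}$ (operations of $\mathbf A$ pointwise) generated by all $g$ such that for some $i$ and $(a,b)\in\alpha_i$, $g(x)=a$ if $x_i=0$ and $g(x)=b$ if $x_i=1$; the commutator $[\alpha_1,\dots,\alpha_n]_{\mathbf A}$ is the smallest congruence $\delta$ of $\mathbf A$ such that for all $f\in M_{\mathbf A}(\alpha_1,\dots,\alpha_n)$: if $(f(x0),f(x1))\in\delta$ for all $x\in\{0,1\}^{n-1}\setminus\{(1,\dots,1)\}$, then $(f(1,\dots,1,0),f(1,\dots,1,1))\in\delta$. *)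

theory Defs
  imports "HOL-Algebra.Group"
begin

text \<open>An algebra is given by a carrier set A and a set F of operations; each operation
  is a pair (k, f) of an arity k and a function f acting on argument lists of length k.\<close>

type_synonym 'a ops = "(nat \<times> ('a list \<Rightarrow> 'a)) set"

definition congruence_alg :: "'a set \<Rightarrow> 'a ops \<Rightarrow> ('a \<times> 'a) set \<Rightarrow> bool" where
  "congruence_alg A F \<theta> \<longleftrightarrow> equiv A \<theta> \<and>
     (\<forall>(k, f) \<in> F. \<forall>xs ys. length xs = k \<longrightarrow> length ys = k \<longrightarrow>
        (\<forall>j < k. (xs ! j, ys ! j) \<in> \<theta>) \<longrightarrow> (f xs, f ys) \<in> \<theta>)"

text \<open>The index set {0,1}^n, as boolean lists of length n (False = 0, True = 1).\<close>
definition cube :: "nat \<Rightarrow> bool list set" where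
  "cube n = {x. length x = n}"

text \<open>M_A(alpha_1,...,alpha_n) as a subset of A^({0,1}^n); elements are functions on
  cube n, extended by undefined outside.  alpha i (i < n) stands for alpha_(i+1).\<close>
inductive_set M_alg :: "'a set \<Rightarrow> 'a ops \<Rightarrow> nat \<Rightarrow> (nat \<Rightarrow> ('a \<times> 'a) set)
    \<Rightarrow> (bool list \<Rightarrow> 'a) set"
  for A F n \<alpha> where
  gen: "\<lbrakk>i < n; (a, b) \<in> \<alpha> i\<rbrakk> \<Longrightarrow>
     (\<lambda>x. if x \<in> cube n then (if x ! i then b else a) else undefined) \<in> M_alg A F n \<alpha>"
| op: "\<lbrakk>(k, f) \<in> F; length gs = k; \<forall>g \<in> set gs. g \<in> M_alg A F n \<alpha>\<rbrakk> \<Longrightarrow>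
     (\<lambda>x. if x \<in> cube n then f (map (\<lambda>g. g x) gs) else undefined) \<in> M_alg A F n \<alpha>"

definition centralizes :: "'a set \<Rightarrow> 'a ops \<Rightarrow> nat \<Rightarrow> (nat \<Rightarrow> ('a \<times> 'a) set)
    \<Rightarrow> ('a \<times> 'a) set \<Rightarrow> bool" where
  "centralizes A F n \<alpha> \<delta> \<longleftrightarrow>
     (\<forall>f \<in> M_alg A F n \<alpha>.
        (\<forall>x \<in> cube (n - 1). x \<noteq> replicate (n - 1) True \<longrightarrow>
            (f (x @ [False]), f (x @ [True])) \<in> \<delta>) \<longrightarrow>
        (f (replicate (n - 1) True @ [False]), f (replicate (n - 1) True @ [True])) \<in> \<delta>)"

definition commutator :: "'a set \<Rightarrow> 'a ops \<Rightarrow> nat \<Rightarrow> (nat \<Rightarrow> ('a \<times> 'a) set)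
    \<Rightarrow> ('a \<times> 'a) set" where
  "commutator A F n \<alpha> = \<Inter> {\<delta>. congruence_alg A F \<delta> \<and> centralizes A F n \<alpha> \<delta>}"

definition group_ops :: "('a, 'b) monoid_scheme \<Rightarrow> 'a ops" where
  "group_ops G = {(2, \<lambda>xs. xs ! 0 \<otimes>\<^bsub>G\<^esub> xs ! 1), (1, \<lambda>xs. inv\<^bsub>G\<^esub> (xs ! 0)), (0, \<lambda>xs. \<one>\<^bsub>G\<^esub>)}"

definition semigroup_ops :: "('a, 'b) monoid_scheme \<Rightarrow> 'a ops" where
  "semigroup_ops G = {(2, \<lambda>xs. xs ! 0 \<otimes>\<^bsub>G\<^esub> xs ! 1)}"

end

theory Submission
  imports Defs
begin

text \<open>A congruence of the reduct (G, *) already respects inverses, since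
  a\<inverse> = a\<inverse> b b\<inverse> is congruent to a\<inverse> a b\<inverse> = b\<inverse>; so G and its reduct have the same
  congruences.  The algebra M over the reduct is closed under pointwise inverse, because
  generators are inverted by generators and (g h)\<inverse> = h\<inverse> g\<inverse>, and it contains the constant 1
  as the generator for the pair (1, 1); hence it equals M over the group.\<close>

lemma congruence_alg_mono:
  "congruence_alg A F \<theta> \<Longrightarrow> F' \<subseteq> F \<Longrightarrow> congruence_alg A F' \<theta>"
  unfolding congruence_alg_def by blast

lemma congruence_alg_refl: "congruence_alg A F \<theta> \<Longrightarrow> a \<in> A \<Longrightarrow> (a, a) \<in> \<theta>"
  unfolding congruence_alg_def equiv_def refl_on_def by blast

lemma congruence_alg_carrier: "congruence_alg A F \<theta> \<Longrightarrow> (a, b) \<in> \<theta> \<Longrightarrow> a \<in> A \<and> b \<in> A"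
  unfolding congruence_alg_def equiv_def refl_on_def by blast

lemma congruence_alg_sym: "congruence_alg A F \<theta> \<Longrightarrow> (a, b) \<in> \<theta> \<Longrightarrow> (b, a) \<in> \<theta>"
  unfolding congruence_alg_def equiv_def sym_def by blast

lemma semigroup_ops_subset_group_ops: "semigroup_ops G \<subseteq> group_ops G"
  unfolding semigroup_ops_def group_ops_def by simp

lemma mult_op_in_semigroup_ops: "(2, \<lambda>xs. xs ! 0 \<otimes>\<^bsub>G\<^esub> xs ! 1) \<in> semigroup_ops G"
  by (simp add: semigroup_ops_def)

lemma group_ops_cases:
  assumes "(k, f) \<in> group_ops G"
  obtains "k = 2" "f = (\<lambda>xs. xs ! 0 \<otimes>\<^bsub>G\<^esub> xs ! 1)"
    | "k = 1" "f = (\<lambda>xs. inv\<^bsub>G\<^esub> (xs ! 0))"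
    | "k = 0" "f = (\<lambda>xs. \<one>\<^bsub>G\<^esub>)"
  using assms unfolding group_ops_def by auto

lemma congruence_alg_op:
  assumes "congruence_alg A F \<theta>" "(k, f) \<in> F" "length xs = k" "length ys = k"
    and "\<forall>j<k. (xs ! j, ys ! j) \<in> \<theta>"
  shows "(f xs, f ys) \<in> \<theta>"
  using assms unfolding congruence_alg_def by blast

lemma congruence_alg_mult:
  assumes "congruence_alg A F \<theta>" "(2, \<lambda>xs. xs ! 0 \<otimes>\<^bsub>G\<^esub> xs ! 1) \<in> F"
    and "(x, x') \<in> \<theta>" "(y, y') \<in> \<theta>"
  shows "(x \<otimes>\<^bsub>G\<^esub> y, x' \<otimes>\<^bsub>G\<^esub> y') \<in> \<theta>"
proof -
  have "\<forall>j<2. ([x, y] ! j, [x', y'] ! j) \<in> \<theta>"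
    using assms(3,4) by (auto simp: less_2_cases_iff)
  from congruence_alg_op[OF assms(1,2) _ _ this] show ?thesis
    by simp
qed

lemma congruence_alg_semigroup_inv:
  assumes "group G" and \<theta>: "congruence_alg (carrier G) (semigroup_ops G) \<theta>"
    and ab: "(a, b) \<in> \<theta>"
  shows "(inv\<^bsub>G\<^esub> a, inv\<^bsub>G\<^esub> b) \<in> \<theta>"
proof -
  interpret group G by fact
  have mult: "(x \<otimes>\<^bsub>G\<^esub> y, x' \<otimes>\<^bsub>G\<^esub> y') \<in> \<theta>" if "(x, x') \<in> \<theta>" "(y, y') \<in> \<theta>" for x x' y y'
    by (rule congruence_alg_mult[OF \<theta> mult_op_in_semigroup_ops that])
  have a: "a \<in> carrier G" and b: "b \<in> carrier G"
    using congruence_alg_carrier[OF \<theta> ab] by auto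
  have "(inv\<^bsub>G\<^esub> a \<otimes>\<^bsub>G\<^esub> (b \<otimes>\<^bsub>G\<^esub> inv\<^bsub>G\<^esub> b), inv\<^bsub>G\<^esub> a \<otimes>\<^bsub>G\<^esub> (a \<otimes>\<^bsub>G\<^esub> inv\<^bsub>G\<^esub> b)) \<in> \<theta>"
    using a b congruence_alg_sym[OF \<theta> ab] by (intro mult congruence_alg_refl[OF \<theta>]) auto
  moreover have "inv\<^bsub>G\<^esub> a \<otimes>\<^bsub>G\<^esub> (b \<otimes>\<^bsub>G\<^esub> inv\<^bsub>G\<^esub> b) = inv\<^bsub>G\<^esub> a"
    using a b by simp
  moreover have "inv\<^bsub>G\<^esub> a \<otimes>\<^bsub>G\<^esub> (a \<otimes>\<^bsub>G\<^esub> inv\<^bsub>G\<^esub> b) = inv\<^bsub>G\<^esub> b"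
    using a b by (simp add: m_assoc[symmetric])
  ultimately show ?thesis
    by simp
qed

lemma congruence_alg_group_iff_semigroup:
  assumes "group G"
  shows "congruence_alg (carrier G) (group_ops G) \<theta> \<longleftrightarrow>
    congruence_alg (carrier G) (semigroup_ops G) \<theta>"
proof
  assume "congruence_alg (carrier G) (group_ops G) \<theta>"
  then show "congruence_alg (carrier G) (semigroup_ops G) \<theta>"
    by (rule congruence_alg_mono[OF _ semigroup_ops_subset_group_ops])
next
  assume semi: "congruence_alg (carrier G) (semigroup_ops G) \<theta>"
  have "(f xs, f ys) \<in> \<theta>"
    if "(k, f) \<in> group_ops G" "\<forall>j<k. (xs ! j, ys ! j) \<in> \<theta>" for k f xs ys
    using that(1)
  proof (cases rule: group_ops_cases)
    case 1
    then show ?thesis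
      using that(2) congruence_alg_mult[OF semi mult_op_in_semigroup_ops, of "xs ! 0" "ys ! 0" "xs ! 1" "ys ! 1"] by simp
  next
    case 2
    then show ?thesis
      using that(2) congruence_alg_semigroup_inv[OF assms semi, of "xs ! 0" "ys ! 0"] by simp
  next
    case 3
    then show ?thesis
      using congruence_alg_refl[OF semi monoid.one_closed[OF group.is_monoid[OF assms]]] by simp
  qed
  moreover have "equiv (carrier G) \<theta>"
    using semi unfolding congruence_alg_def by blast
  ultimately show "congruence_alg (carrier G) (group_ops G) \<theta>"
    unfolding congruence_alg_def by fast
qed

lemma M_alg_mono:
  assumes "F \<subseteq> F'"
  shows "M_alg A F n \<alpha> \<subseteq> M_alg A F' n \<alpha>"
proof
  fix f assume "f \<in> M_alg A F n \<alpha>"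
  then show "f \<in> M_alg A F' n \<alpha>"
  proof (induction rule: M_alg.induct)
    case (gen i a b)
    then show ?case by (rule M_alg.gen)
  next
    case (op k f gs)
    then show ?case using assms by (intro M_alg.op) auto
  qed
qed

lemma M_alg_closed:
  assumes "\<And>i a b. i < n \<Longrightarrow> (a, b) \<in> \<alpha> i \<Longrightarrow> a \<in> B \<and> b \<in> B"
    and "\<And>k f xs. (k, f) \<in> F \<Longrightarrow> length xs = k \<Longrightarrow> set xs \<subseteq> B \<Longrightarrow> f xs \<in> B"
    and "f \<in> M_alg A F n \<alpha>" "x \<in> cube n"
  shows "f x \<in> B"
  using assms(3,4)
proof (induction rule: M_alg.induct)
  case (gen i a b)
  then show ?case using assms(1)[OF gen.hyps] by simp
next
  case (op k f gs)
  have "set (map (\<lambda>g. g x) gs) \<subseteq> B"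
    using op.IH op.prems by auto
  then show ?case
    using assms(2)[OF op.hyps(1)] op.hyps(2) op.prems by simp
qed

lemma M_alg_gen_restrict:
  "i < n \<Longrightarrow> (a, b) \<in> \<alpha> i \<Longrightarrow> (\<lambda>x\<in>cube n. if x ! i then b else a) \<in> M_alg A F n \<alpha>"
  unfolding restrict_def by (rule M_alg.gen)

lemma M_alg_mult:
  assumes "(2, \<lambda>xs. xs ! 0 \<otimes>\<^bsub>G\<^esub> xs ! 1) \<in> F" "g \<in> M_alg A F n \<alpha>" "h \<in> M_alg A F n \<alpha>"
  shows "(\<lambda>x\<in>cube n. g x \<otimes>\<^bsub>G\<^esub> h x) \<in> M_alg A F n \<alpha>"
proof -
  have "(\<lambda>x. if x \<in> cube n then (\<lambda>xs. xs ! 0 \<otimes>\<^bsub>G\<^esub> xs ! 1) (map (\<lambda>g. g x) [g, h]) else undefined)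
      \<in> M_alg A F n \<alpha>"
    using M_alg.op[OF assms(1), of "[g, h]"] assms(2,3) by simp
  then show ?thesis
    by (simp add: restrict_def cong: if_cong)
qed

lemma M_alg_semigroup_carrier:
  assumes "group G" "\<And>i. i < n \<Longrightarrow> congruence_alg (carrier G) (semigroup_ops G) (\<alpha> i)"
    and "g \<in> M_alg A (semigroup_ops G) n \<alpha>" "x \<in> cube n"
  shows "g x \<in> carrier G"
proof (rule M_alg_closed[OF _ _ assms(3,4)])
  show "a \<in> carrier G \<and> b \<in> carrier G" if "i < n" "(a, b) \<in> \<alpha> i" for i a b
    using congruence_alg_carrier[OF assms(2)] that by blast
  show "f xs \<in> carrier G"
    if "(k, f) \<in> semigroup_ops G" "length xs = k" "set xs \<subseteq> carrier G" for k f xs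
  proof -
    from that(1) have "k = 2" and f: "f = (\<lambda>xs. xs ! 0 \<otimes>\<^bsub>G\<^esub> xs ! 1)"
      by (auto simp: semigroup_ops_def)
    with that(2,3) have "xs ! 0 \<in> carrier G" "xs ! 1 \<in> carrier G"
      by (auto dest!: nth_mem)
    then show ?thesis
      unfolding f by (rule monoid.m_closed[OF group.is_monoid[OF assms(1)]])
  qed
qed

lemma M_alg_semigroup_inv_closed:
  assumes "group G" "\<And>i. i < n \<Longrightarrow> congruence_alg (carrier G) (semigroup_ops G) (\<alpha> i)"
    and "g \<in> M_alg A (semigroup_ops G) n \<alpha>"
  shows "(\<lambda>x\<in>cube n. inv\<^bsub>G\<^esub> g x) \<in> M_alg A (semigroup_ops G) n \<alpha>"
  using assms(3)
proof (induction rule: M_alg.induct)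
  case (gen i a b)
  have "(inv\<^bsub>G\<^esub> a, inv\<^bsub>G\<^esub> b) \<in> \<alpha> i"
    using congruence_alg_semigroup_inv[OF assms(1) assms(2)] gen by blast
  from M_alg_gen_restrict[where A=A and F="semigroup_ops G" and n=n and \<alpha>=\<alpha>, OF gen(1) this]
  show ?case by (simp add: restrict_def if_distrib[where f="\<lambda>x. inv\<^bsub>G\<^esub> x"] cong: if_cong)
next
  case (op k f gs)
  then obtain g h where gs: "gs = [g, h]" and f: "f = (\<lambda>xs. xs ! 0 \<otimes>\<^bsub>G\<^esub> xs ! 1)"
    by (auto simp: semigroup_ops_def numeral_2_eq_2 length_Suc_conv)
  have "(\<lambda>x\<in>cube n. (\<lambda>x\<in>cube n. inv\<^bsub>G\<^esub> h x) x \<otimes>\<^bsub>G\<^esub> (\<lambda>x\<in>cube n. inv\<^bsub>G\<^esub> g x) x)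
      \<in> M_alg A (semigroup_ops G) n \<alpha>"
    using op.IH gs by (intro M_alg_mult[OF mult_op_in_semigroup_ops]) auto
  moreover have "g x \<in> carrier G" "h x \<in> carrier G" if "x \<in> cube n" for x
    using op.IH gs M_alg_semigroup_carrier[OF assms(1,2) _ that] by auto
  moreover have "inv\<^bsub>G\<^esub> (g x \<otimes>\<^bsub>G\<^esub> h x) = inv\<^bsub>G\<^esub> h x \<otimes>\<^bsub>G\<^esub> inv\<^bsub>G\<^esub> g x" if "x \<in> cube n" for x
    using calculation(2,3)[OF that] by (rule group.inv_mult_group[OF assms(1)])
  ultimately show ?case
    by (simp add: restrict_def gs f cong: if_cong)
qed

lemma M_alg_group_eq_semigroup:
  assumes "group G" "n \<ge> 1"
    and "\<And>i. i < n \<Longrightarrow> congruence_alg (carrier G) (semigroup_ops G) (\<alpha> i)"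
  shows "M_alg A (group_ops G) n \<alpha> = M_alg A (semigroup_ops G) n \<alpha>"
proof
  show "M_alg A (group_ops G) n \<alpha> \<subseteq> M_alg A (semigroup_ops G) n \<alpha>"
  proof
    fix g assume "g \<in> M_alg A (group_ops G) n \<alpha>"
    then show "g \<in> M_alg A (semigroup_ops G) n \<alpha>"
    proof (induction rule: M_alg.induct)
      case (gen i a b)
      then show ?case by (rule M_alg.gen)
    next
      case (op k f gs)
      from op.hyps(1) show ?case
      proof (cases rule: group_ops_cases)
        case 1
        then show ?thesis
          using op.hyps(2) op.IH by (intro M_alg.op) (auto simp: semigroup_ops_def)
      next
        case 2
        then obtain g where "gs = [g]"
          using op.hyps(2) by (auto simp: length_Suc_conv)
        then show ?thesis
          using 2 op.IH M_alg_semigroup_inv_closed[OF assms(1,3), where g=g and A=A]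
          by (simp add: restrict_def cong: if_cong)
      next
        case 3
        have "(\<one>\<^bsub>G\<^esub>, \<one>\<^bsub>G\<^esub>) \<in> \<alpha> 0"
          using assms(2) congruence_alg_refl[OF assms(3) monoid.one_closed[OF group.is_monoid[OF assms(1)]]]
          by simp
        then show ?thesis
          using 3 M_alg_gen_restrict[of 0 n "\<one>\<^bsub>G\<^esub>" "\<one>\<^bsub>G\<^esub>" \<alpha> A "semigroup_ops G"] assms(2)
          by (simp add: restrict_def cong: if_cong)
      qed
    qed
  qed
  show "M_alg A (semigroup_ops G) n \<alpha> \<subseteq> M_alg A (group_ops G) n \<alpha>"
    by (rule M_alg_mono[OF semigroup_ops_subset_group_ops])
qed

theorem lemma2p3:
  fixes G :: "('a, 'b) monoid_scheme" and n :: nat and \<alpha> :: "nat \<Rightarrow> ('a \<times> 'a) set"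
  assumes "group G" and "n \<ge> 1"
    and "\<And>i. i < n \<Longrightarrow> congruence_alg (carrier G) (group_ops G) (\<alpha> i)"
  shows "commutator (carrier G) (group_ops G) n \<alpha> = commutator (carrier G) (semigroup_ops G) n \<alpha>"
proof -
  note congruences_eq = congruence_alg_group_iff_semigroup[OF assms(1)]
  have "M_alg (carrier G) (group_ops G) n \<alpha> = M_alg (carrier G) (semigroup_ops G) n \<alpha>"
    using assms by (intro M_alg_group_eq_semigroup) (auto simp: congruences_eq)
  then have "centralizes (carrier G) (group_ops G) n \<alpha> = centralizes (carrier G) (semigroup_ops G) n \<alpha>"
    unfolding centralizes_def by simp
  then show ?thesis
    unfolding commutator_def congruences_eq by simp
qed

end
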